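(* Let $p,q\in\mathbb{R}[t_1,\dots,t_\ell]$ satisfy $p\succeq0$, $q\succeq0$ and $p\simeq q$. Then $p$ and $q$ have the same leading homogeneous component.
   Context: For $p\in\mathbb{R}[\bar t]$, $\bar t=(t_1,\dots,t_\ell)$, write $p=p_0+p_1+\dots+p_d$ with $p_i$ homogeneous of degree $i$ and $p_d\ne0$; $p_d$ is the leading homogeneous component of $p$. Write $p\preceq q$ if there is $\bar c\in\mathbb{N}^\ell$ such that $p(\bar n)\le q(\bar n+\bar c)$ for all $\bar n\in\mathbb{N}^\ell$ large enough; $p\simeq q$ if $p\preceq q$ and $q\preceq p$; and $p\succeq0$ if $p(\bar n)\ge0$ for all $\bar n\in\mathbb{N}^\ell$ large enough. ("Large enough" means all coordinates of $\bar n$ are at least some bound.) *)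

theory Defs
  imports Complex_Main "HOL-Library.Poly_Mapping"
begin

text \<open>Real polynomials in variables t_0, t_1, ... are represented as finitely supported
maps from monomials (exponent vectors nat =>0 nat) to real coefficients.
A polynomial lies in R[t_1..t_l] iff all its monomials only involve variables < l.\<close>

type_synonym rpoly = "(nat \<Rightarrow>\<^sub>0 nat) \<Rightarrow>\<^sub>0 real"

definition in_vars :: "nat \<Rightarrow> rpoly \<Rightarrow> bool" where
  "in_vars l p \<longleftrightarrow> (\<forall>m. m \<in> Poly_Mapping.keys p \<longrightarrow> Poly_Mapping.keys m \<subseteq> {..<l})"

definition mon_eval :: "(nat \<Rightarrow>\<^sub>0 nat) \<Rightarrow> (nat \<Rightarrow> real) \<Rightarrow> real" where
  "mon_eval m x = (\<Prod>i\<in>Poly_Mapping.keys m. x i ^ Poly_Mapping.lookup m i)"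

definition peval :: "rpoly \<Rightarrow> (nat \<Rightarrow> nat) \<Rightarrow> real" where
  "peval p n = (\<Sum>m\<in>Poly_Mapping.keys p. Poly_Mapping.lookup p m * mon_eval m (\<lambda>i. real (n i)))"

definition mdeg :: "(nat \<Rightarrow>\<^sub>0 nat) \<Rightarrow> nat" where
  "mdeg m = (\<Sum>i\<in>Poly_Mapping.keys m. Poly_Mapping.lookup m i)"

definition pdeg :: "rpoly \<Rightarrow> nat" where
  "pdeg p = Max (mdeg ` Poly_Mapping.keys p)"

definition lead_hom :: "rpoly \<Rightarrow> (nat \<Rightarrow>\<^sub>0 nat) \<Rightarrow> real" where
  "lead_hom p m = (if mdeg m = pdeg p then Poly_Mapping.lookup p m else 0)"

definition large_enough :: "nat \<Rightarrow> ((nat \<Rightarrow> nat) \<Rightarrow> bool) \<Rightarrow> bool" where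
  "large_enough l P \<longleftrightarrow> (\<exists>N. \<forall>n. (\<forall>i<l. N \<le> n i) \<longrightarrow> P n)"

definition pprec :: "nat \<Rightarrow> rpoly \<Rightarrow> rpoly \<Rightarrow> bool" where
  "pprec l p q \<longleftrightarrow> (\<exists>c::nat \<Rightarrow> nat. large_enough l (\<lambda>n. peval p n \<le> peval q (\<lambda>i. n i + c i)))"

definition psim :: "nat \<Rightarrow> rpoly \<Rightarrow> rpoly \<Rightarrow> bool" where
  "psim l p q \<longleftrightarrow> pprec l p q \<and> pprec l q p"

definition pnonneg :: "nat \<Rightarrow> rpoly \<Rightarrow> bool" where
  "pnonneg l p \<longleftrightarrow> large_enough l (\<lambda>n. 0 \<le> peval p n)"

end

theory Submission imports Defs "HOL-Computational_Algebra.Polynomial" begin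

text \<open>Let \<open>D\<close> be the largest degree of a monomial of \<open>p\<close> or \<open>q\<close>. Along a ray
  \<open>t \<mapsto> t a + c\<close> with \<open>a \<ge> 1\<close>, the value of a polynomial divided by \<open>t ^ D\<close> tends to the
  value at \<open>a\<close> of its degree-\<open>D\<close> homogeneous component. The shift by \<open>c\<close> disappears in
  the limit, so \<open>p \<preceq> q\<close> and \<open>q \<preceq> p\<close> force these components to agree at every integer
  point \<open>a \<ge> 1\<close>, hence as polynomials. One of them is nonzero by the choice of \<open>D\<close>, so
  both are the leading homogeneous components.\<close>

lemma power_sum_coeff_eq_zero:
  fixes b :: "nat \<Rightarrow> 'a::idom"
  assumes "finite K" and "infinite X"
    and vanish: "\<And>x. x \<in> X \<Longrightarrow> (\<Sum>k\<in>K. b k * x ^ k) = 0"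
    and "k \<in> K"
  shows "b k = 0"
proof -
  define P where "P = (\<Sum>k\<in>K. monom (b k) k)"
  have "P = 0"
  proof (rule ccontr)
    assume "P \<noteq> 0"
    then have "finite {x. poly P x = 0}" by (rule poly_roots_finite)
    moreover have "X \<subseteq> {x. poly P x = 0}"
      using vanish by (auto simp: P_def poly_sum poly_monom)
    ultimately show False using \<open>infinite X\<close> by (meson finite_subset)
  qed
  moreover have "coeff P k = b k"
    using assms(1,4) by (simp add: P_def coeff_sum coeff_monom)
  ultimately show ?thesis by simp
qed

lemma monomial_sum_coeff_eq_zero:
  fixes r :: "'a \<Rightarrow> real" and e :: "'a \<Rightarrow> nat \<Rightarrow> nat"
  assumes "finite S"
    and "\<forall>m\<in>S. \<forall>m'\<in>S. (\<forall>i<l. e m i = e m' i) \<longrightarrow> m = m'"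
    and "\<forall>a::nat\<Rightarrow>nat. (\<forall>i. 1 \<le> a i) \<longrightarrow> (\<Sum>m\<in>S. r m * (\<Prod>i<l. real (a i) ^ e m i)) = 0"
    and "m \<in> S"
  shows "r m = 0"
  using assms
proof (induction l arbitrary: S m)
  case 0
  then have "S = {m}" by auto
  with "0.prems"(3) show ?case by auto
next
  case (Suc l)
  define T where "T k = {m'\<in>S. e m' l = k}" for k
  define G where "G k a = (\<Sum>m\<in>T k. r m * (\<Prod>i<l. real (a i) ^ e m i))" for k a
  \<comment> \<open>Grouped by the exponent of variable \<open>l\<close>, the sum is a polynomial in \<open>a l\<close> with coefficients \<open>G k a\<close>.\<close>
  have G_eq_zero: "G k a = 0" if a: "\<forall>i. 1 \<le> a i" and k: "k \<in> (\<lambda>m. e m l) ` S" for k a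
  proof (rule power_sum_coeff_eq_zero[of "(\<lambda>m. e m l) ` S" "real ` {1..}"])
    show "finite ((\<lambda>m. e m l) ` S)" using Suc.prems(1) by simp
    show "infinite (real ` {1::nat..})"
      by (metis finite_imageD infinite_Ici inj_on_of_nat)
    fix y assume "y \<in> real ` {1::nat..}"
    then obtain x :: nat where x: "1 \<le> x" "y = real x" by auto
    have "\<forall>i. 1 \<le> (a(l := x)) i" using a x by simp
    then have "0 = (\<Sum>m\<in>S. r m * (\<Prod>i<Suc l. real ((a(l := x)) i) ^ e m i))"
      using Suc.prems(3) by presburger
    also have "\<dots> = (\<Sum>m\<in>S. r m * (\<Prod>i<l. real (a i) ^ e m i) * y ^ e m l)"
      using x by (intro sum.cong) (auto simp: lessThan_Suc)
    also have "\<dots> = (\<Sum>k\<in>(\<lambda>m. e m l) ` S. \<Sum>m\<in>T k. r m * (\<Prod>i<l. real (a i) ^ e m i) * y ^ e m l)"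
      unfolding T_def by (rule sum.group[symmetric]) (use Suc.prems(1) in auto)
    also have "\<dots> = (\<Sum>k\<in>(\<lambda>m. e m l) ` S. G k a * y ^ k)"
      unfolding G_def sum_distrib_right by (auto simp: T_def intro!: sum.cong)
    finally show "(\<Sum>k\<in>(\<lambda>m. e m l) ` S. G k a * y ^ k) = 0" by simp
  qed (use k in auto)
  show ?case
  proof (rule Suc.IH[of "T (e m l)" m])
    show "finite (T (e m l))" "m \<in> T (e m l)"
      using Suc.prems(1,4) by (auto simp: T_def)
    show "\<forall>m1\<in>T (e m l). \<forall>m2\<in>T (e m l). (\<forall>i<l. e m1 i = e m2 i) \<longrightarrow> m1 = m2"
      using Suc.prems(2) by (auto simp: T_def less_Suc_eq)
    show "\<forall>a. (\<forall>i. 1 \<le> a i) \<longrightarrow> (\<Sum>m'\<in>T (e m l). r m' * (\<Prod>i<l. real (a i) ^ e m' i)) = 0"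
      using G_eq_zero Suc.prems(4) unfolding G_def by auto
  qed
qed

lemma monomial_eq_if_lookup_eq_on_vars:
  assumes "Poly_Mapping.keys m1 \<subseteq> {..<l}" and "Poly_Mapping.keys m2 \<subseteq> {..<l}"
    and "\<forall>i<l. Poly_Mapping.lookup m1 i = Poly_Mapping.lookup m2 i"
  shows "m1 = m2"
proof (rule poly_mapping_eqI)
  fix i
  show "Poly_Mapping.lookup m1 i = Poly_Mapping.lookup m2 i"
  proof (cases "i < l")
    case True
    with assms(3) show ?thesis by simp
  next
    case False
    then have "i \<notin> Poly_Mapping.keys m1" "i \<notin> Poly_Mapping.keys m2"
      using assms(1,2) by auto
    then show ?thesis by (simp add: in_keys_iff)
  qed
qed

lemma mon_eval_in_vars:
  assumes "Poly_Mapping.keys m \<subseteq> {..<l}"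
  shows "mon_eval m x = (\<Prod>i<l. x i ^ Poly_Mapping.lookup m i)"
  unfolding mon_eval_def using assms
  by (intro prod.mono_neutral_left) (auto simp: in_keys_iff)

lemma mon_eval_ray_limit:
  assumes "mdeg m \<le> D"
  shows "(\<lambda>t::nat. mon_eval m (\<lambda>i. real (t * a i + c i)) / real t ^ D) \<longlonglongrightarrow>
           (if mdeg m = D then mon_eval m (\<lambda>i. real (a i)) else 0)"
proof -
  define f where "f t = (\<Prod>i\<in>Poly_Mapping.keys m.
      (real (a i) + real (c i) * (1 / real t)) ^ Poly_Mapping.lookup m i) * (1 / real t) ^ (D - mdeg m)"
    for t :: nat
  have f_eq: "mon_eval m (\<lambda>i. real (t * a i + c i)) / real t ^ D = f t" if "t > 0" for t :: nat
  proof -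
    have "real (t * a i + c i) = real t * (real (a i) + real (c i) * (1 / real t))" for i
      using \<open>t > 0\<close> by (simp add: field_simps)
    then have "mon_eval m (\<lambda>i. real (t * a i + c i)) = real t ^ mdeg m *
        (\<Prod>i\<in>Poly_Mapping.keys m. (real (a i) + real (c i) * (1 / real t)) ^ Poly_Mapping.lookup m i)"
      by (simp add: mon_eval_def mdeg_def power_mult_distrib prod.distrib power_sum)
    moreover have "real t ^ D = real t ^ mdeg m * real t ^ (D - mdeg m)"
      using assms by (simp flip: power_add)
    ultimately show ?thesis
      using \<open>t > 0\<close> by (simp add: f_def power_one_over)
  qed
  have "f \<longlonglongrightarrow> (\<Prod>i\<in>Poly_Mapping.keys m.
      (real (a i) + real (c i) * 0) ^ Poly_Mapping.lookup m i) * 0 ^ (D - mdeg m)"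
    unfolding f_def by (intro tendsto_intros lim_inverse_n')
  then have "f \<longlonglongrightarrow> (if mdeg m = D then mon_eval m (\<lambda>i. real (a i)) else 0)"
    using assms by (cases "mdeg m = D") (simp_all add: mon_eval_def power_0_left)
  then show ?thesis
    by (rule Lim_transform_eventually) (use f_eq in \<open>auto simp: eventually_sequentially intro!: exI[of _ 1]\<close>)
qed

definition hom_eval :: "nat \<Rightarrow> rpoly \<Rightarrow> (nat \<Rightarrow> nat) \<Rightarrow> real" where
  "hom_eval D p a = (\<Sum>m\<in>{m\<in>Poly_Mapping.keys p. mdeg m = D}.
      Poly_Mapping.lookup p m * mon_eval m (\<lambda>i. real (a i)))"

lemma hom_eval_superset:
  assumes "finite K" and "Poly_Mapping.keys p \<subseteq> K"
  shows "hom_eval D p a = (\<Sum>m\<in>{m\<in>K. mdeg m = D}. Poly_Mapping.lookup p m * mon_eval m (\<lambda>i. real (a i)))"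
  unfolding hom_eval_def using assms
  by (intro sum.mono_neutral_left) (auto simp: in_keys_iff)

lemma peval_ray_limit:
  assumes "\<forall>m\<in>Poly_Mapping.keys p. mdeg m \<le> D"
  shows "(\<lambda>t::nat. peval p (\<lambda>i. t * a i + c i) / real t ^ D) \<longlonglongrightarrow> hom_eval D p a"
proof -
  have "(\<lambda>t. \<Sum>m\<in>Poly_Mapping.keys p. Poly_Mapping.lookup p m *
        (mon_eval m (\<lambda>i. real (t * a i + c i)) / real t ^ D)) \<longlonglongrightarrow>
      (\<Sum>m\<in>Poly_Mapping.keys p. Poly_Mapping.lookup p m *
        (if mdeg m = D then mon_eval m (\<lambda>i. real (a i)) else 0))"
    using assms by (intro tendsto_sum tendsto_mult_left mon_eval_ray_limit) auto
  also have "(\<Sum>m\<in>Poly_Mapping.keys p. Poly_Mapping.lookup p m *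
        (if mdeg m = D then mon_eval m (\<lambda>i. real (a i)) else 0)) = hom_eval D p a"
    unfolding hom_eval_def by (simp add: sum.inter_filter if_distrib cong: if_cong)
  finally show ?thesis
    by (simp add: peval_def sum_divide_distrib)
qed

lemma pprec_imp_hom_eval_le:
  assumes "\<forall>m\<in>Poly_Mapping.keys p. mdeg m \<le> D" and "\<forall>m\<in>Poly_Mapping.keys q. mdeg m \<le> D"
    and "pprec l p q" and "\<forall>i. 1 \<le> a i"
  shows "hom_eval D p a \<le> hom_eval D q a"
proof -
  obtain c N where prec: "\<And>n. \<forall>i<l. N \<le> n i \<Longrightarrow> peval p n \<le> peval q (\<lambda>i. n i + c i)"
    using \<open>pprec l p q\<close> unfolding pprec_def large_enough_def by blast
  show ?thesis
  proof (rule LIMSEQ_le)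
    show "(\<lambda>t::nat. peval p (\<lambda>i. t * a i + 0) / real t ^ D) \<longlonglongrightarrow> hom_eval D p a"
      using assms(1) by (rule peval_ray_limit)
    show "(\<lambda>t::nat. peval q (\<lambda>i. t * a i + c i) / real t ^ D) \<longlonglongrightarrow> hom_eval D q a"
      using assms(2) by (rule peval_ray_limit)
    have "peval p (\<lambda>i. t * a i) \<le> peval q (\<lambda>i. t * a i + c i)" if "N \<le> t" for t
      using that \<open>\<forall>i. 1 \<le> a i\<close> by (intro prec) (metis le_trans mult_le_mono2 mult_1_right)
    then show "\<exists>M. \<forall>t\<ge>M. peval p (\<lambda>i. t * a i + 0) / real t ^ D \<le>
        peval q (\<lambda>i. t * a i + c i) / real t ^ D"
      by (intro exI[of _ N] allI impI divide_right_mono) auto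
  qed
qed

lemma hom_eval_eq_imp_coeff_eq:
  assumes "in_vars l p" and "in_vars l q"
    and hom_eq: "\<forall>a. (\<forall>i. 1 \<le> a i) \<longrightarrow> hom_eval D p a = hom_eval D q a"
    and "mdeg m = D"
  shows "Poly_Mapping.lookup p m = Poly_Mapping.lookup q m"
proof (cases "m \<in> Poly_Mapping.keys p \<union> Poly_Mapping.keys q")
  case False
  then show ?thesis by (simp add: in_keys_iff)
next
  case True
  define K where "K = Poly_Mapping.keys p \<union> Poly_Mapping.keys q"
  define S where "S = {m\<in>K. mdeg m = D}"
  have vars: "Poly_Mapping.keys m \<subseteq> {..<l}" if "m \<in> S" for m
    using that assms(1,2) unfolding S_def K_def in_vars_def by auto
  have hom_eval_S: "hom_eval D r a =
      (\<Sum>m\<in>S. Poly_Mapping.lookup r m * (\<Prod>i<l. real (a i) ^ Poly_Mapping.lookup m i))"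
    if "Poly_Mapping.keys r \<subseteq> K" for r a
  proof -
    have "hom_eval D r a = (\<Sum>m\<in>S. Poly_Mapping.lookup r m * mon_eval m (\<lambda>i. real (a i)))"
      unfolding S_def using that by (intro hom_eval_superset) (auto simp: K_def)
    also have "\<dots> = (\<Sum>m\<in>S. Poly_Mapping.lookup r m * (\<Prod>i<l. real (a i) ^ Poly_Mapping.lookup m i))"
      by (intro sum.cong refl) (simp add: mon_eval_in_vars vars)
    finally show ?thesis .
  qed
  have "Poly_Mapping.lookup p m - Poly_Mapping.lookup q m = 0"
  proof (rule monomial_sum_coeff_eq_zero[where e = Poly_Mapping.lookup])
    show "finite S" "m \<in> S"
      using True \<open>mdeg m = D\<close> by (auto simp: S_def K_def)
    show "\<forall>m1\<in>S. \<forall>m2\<in>S. (\<forall>i<l. Poly_Mapping.lookup m1 i = Poly_Mapping.lookup m2 i) \<longrightarrow> m1 = m2"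
      using vars by (blast intro: monomial_eq_if_lookup_eq_on_vars)
    show "\<forall>a. (\<forall>i. 1 \<le> a i) \<longrightarrow> (\<Sum>m\<in>S. (Poly_Mapping.lookup p m - Poly_Mapping.lookup q m) *
        (\<Prod>i<l. real (a i) ^ Poly_Mapping.lookup m i)) = 0"
      using hom_eq hom_eval_S[of p] hom_eval_S[of q]
      by (simp add: K_def left_diff_distrib sum_subtractf)
  qed
  then show ?thesis by simp
qed

lemma pdeg_eqI:
  assumes "\<forall>m\<in>Poly_Mapping.keys p. mdeg m \<le> D" and "m \<in> Poly_Mapping.keys p" and "mdeg m = D"
  shows "pdeg p = D"
  unfolding pdeg_def using assms by (intro Max_eqI) auto

lemma lead_hom_eqI:
  assumes "\<forall>m\<in>Poly_Mapping.keys p. mdeg m \<le> D" and "\<forall>m\<in>Poly_Mapping.keys q. mdeg m \<le> D"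
    and "m0 \<in> Poly_Mapping.keys p \<union> Poly_Mapping.keys q" and "mdeg m0 = D"
    and coeff_eq: "\<And>m. mdeg m = D \<Longrightarrow> Poly_Mapping.lookup p m = Poly_Mapping.lookup q m"
  shows "lead_hom p = lead_hom q"
proof -
  have "m0 \<in> Poly_Mapping.keys p" "m0 \<in> Poly_Mapping.keys q"
    using assms(3) coeff_eq[OF assms(4)] by (auto simp: in_keys_iff)
  then have "pdeg p = D" "pdeg q = D"
    using assms(1,2,4) by (auto intro: pdeg_eqI)
  then show ?thesis by (auto simp: lead_hom_def fun_eq_iff coeff_eq)
qed

theorem proposition4p7:
  fixes l :: nat and p q :: rpoly
  assumes "in_vars l p" and "in_vars l q"
    and "pnonneg l p" and "pnonneg l q"
    and "psim l p q"
  shows "lead_hom p = lead_hom q"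
proof (cases "p = 0 \<and> q = 0")
  case True
  then show ?thesis by simp
next
  case False
  define K where "K = Poly_Mapping.keys p \<union> Poly_Mapping.keys q"
  define D where "D = Max (mdeg ` K)"
  have "finite K" "K \<noteq> {}" using False by (auto simp: K_def)
  then have "D \<in> mdeg ` K" unfolding D_def by (intro Max_in) auto
  then obtain m0 where "m0 \<in> K" "mdeg m0 = D" by auto
  have deg_p: "\<forall>m\<in>Poly_Mapping.keys p. mdeg m \<le> D" and deg_q: "\<forall>m\<in>Poly_Mapping.keys q. mdeg m \<le> D"
    using \<open>finite K\<close> unfolding D_def K_def by auto
  have "pprec l p q" "pprec l q p" using \<open>psim l p q\<close> unfolding psim_def by auto
  have "\<forall>a. (\<forall>i. 1 \<le> a i) \<longrightarrow> hom_eval D p a = hom_eval D q a"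
  proof (intro allI impI)
    fix a :: "nat \<Rightarrow> nat" assume "\<forall>i. 1 \<le> a i"
    show "hom_eval D p a = hom_eval D q a"
      using pprec_imp_hom_eval_le[OF deg_p deg_q \<open>pprec l p q\<close> \<open>\<forall>i. 1 \<le> a i\<close>]
        pprec_imp_hom_eval_le[OF deg_q deg_p \<open>pprec l q p\<close> \<open>\<forall>i. 1 \<le> a i\<close>]
      by (rule order_antisym)
  qed
  then have coeff_eq: "Poly_Mapping.lookup p m = Poly_Mapping.lookup q m" if "mdeg m = D" for m
    using that by (rule hom_eval_eq_imp_coeff_eq[OF assms(1,2)])
  show ?thesis
    using \<open>m0 \<in> K\<close> \<open>mdeg m0 = D\<close> coeff_eq unfolding K_def by (rule lead_hom_eqI[OF deg_p deg_q])
qed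

end
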